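(* Let $G$ be an input tree and $H$ a TLRG with $G\Rightarrow^*_{\{r_0,r_1,r_2\}}H$. Then either $|V_H|=1$ or $H$ is not in normal form (i.e. some rule among $r_0,r_1,r_2$ is applicable to $H$).
   Context: Graphs over a label alphabet $(\mathcal L_V,\mathcal L_E)$ are tuples $G=(V,E,s,t,l,m,p)$ with $V,E$ finite, $s,t:E\to V$ total, $l:V\rightharpoonup\mathcal L_V$ partial, $m:E\to\mathcal L_E$ total, $p:V\rightharpoonup\{0,1\}$ partial (rootedness; root nodes are $p^{-1}(\{1\})$). TLRG = $l,p$ total. Morphisms preserve sources, targets, edge labels, and node labels and rootedness wherever defined. A rule $\langle L\leftarrow K\rightarrow R\rangle$ has TLRGs $L,R$ and a common subgraph $K$ (sets included, $s,t,m$ restricted, $l_K\subseteq l_L$, $p_K\subseteq p_L$, likewise for $R$). It is applied to TLRG $G$ via an injective morphism $g:L\to G$ satisfying the dangling condition (no edge outside $g(L)$ incident to a node of $g(V_L\setminus V_K)$) by deleting images of items of $L$ not in $K$ and undefining label/rootedness of $g_V(v)$ where undefined for $v\in V_K$, then adding disjointly the items of $R$ not in $K$ and setting label/rootedness of $g_V(v)$ to $l_R(v)/p_R(v)$ where undefined in $K$; $G\Rightarrow H$ when $H$ is isomorphic to the result; $\Rightarrow^*$ its reflexive-transitive closure. $\mathcal L=(\{\square,\triangle\},\{\square\})$; all edges labelled $\square$. Rule $r_0$: $L$ has an unrooted node $1$ labelled $\square$, a rooted node $2$ labelled $\square$, edge $1\to2$; $K$ is node $1$ with undefined label and rootedness;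 $R$ is node $1$ rooted labelled $\square$. Rule $r_1$: as $r_0$ but node $1$ of $L$ labelled $\triangle$. Rule $r_2$: $L$ has rooted node $1$ labelled $\square$, unrooted node $2$ labelled $\square$, edge $1\to2$; $K$ is nodes $1,2$ with undefined labels and rootedness, no edges; $R$ has node $1$ unrooted labelled $\triangle$, node $2$ rooted labelled $\square$, edge $1\to2$. An input graph is a TLRG over $\mathcal L$ with exactly one root node in which every node and edge is labelled $\square$. A tree is a non-empty graph whose underlying undirected multigraph is connected and has no undirected cycles (including loops and parallel edges), and in which every node has at most one incoming edge. An input tree is an input graph that is a tree. *)

theory Defs
  imports Main
begin

datatype nlabel = NSq | NTri
datatype elabel = ESq

text \<open>Rootedness p : V -> {0,1} is modelled as bool option
  (Some True = rooted, Some False = unrooted, None = undefined).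
  Partial labellings are option-valued; values outside the carrier are irrelevant.\<close>

record ('v, 'e) graph =
  nodes :: "'v set"
  edges :: "'e set"
  src   :: "'e \<Rightarrow> 'v"
  tgt   :: "'e \<Rightarrow> 'v"
  lab   :: "'v \<Rightarrow> nlabel option"
  elab  :: "'e \<Rightarrow> elabel"
  root  :: "'v \<Rightarrow> bool option"

definition wf_graph :: "('v, 'e) graph \<Rightarrow> bool" where
  "wf_graph G \<longleftrightarrow> finite (nodes G) \<and> finite (edges G) \<and>
     (\<forall>e\<in>edges G. src G e \<in> nodes G \<and> tgt G e \<in> nodes G)"

definition tlrg :: "('v, 'e) graph \<Rightarrow> bool" where
  "tlrg G \<longleftrightarrow> wf_graph G \<and> (\<forall>v\<in>nodes G. lab G v \<noteq> None \<and> root G v \<noteq> None)"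

definition morphism :: "('a, 'b) graph \<Rightarrow> ('v, 'e) graph \<Rightarrow> ('a \<Rightarrow> 'v) \<Rightarrow> ('b \<Rightarrow> 'e) \<Rightarrow> bool" where
  "morphism A B fV fE \<longleftrightarrow>
     fV ` nodes A \<subseteq> nodes B \<and> fE ` edges A \<subseteq> edges B \<and>
     (\<forall>e\<in>edges A. src B (fE e) = fV (src A e) \<and> tgt B (fE e) = fV (tgt A e)
                    \<and> elab B (fE e) = elab A e) \<and>
     (\<forall>v\<in>nodes A. (lab A v \<noteq> None \<longrightarrow> lab B (fV v) = lab A v) \<and>
                    (root A v \<noteq> None \<longrightarrow> root B (fV v) = root A v))"

definition graph_iso :: "('a, 'b) graph \<Rightarrow> ('v, 'e) graph \<Rightarrow> bool" where
  "graph_iso A B \<longleftrightarrow> (\<exists>fV fE.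
     bij_betw fV (nodes A) (nodes B) \<and> bij_betw fE (edges A) (edges B) \<and>
     (\<forall>e\<in>edges A. src B (fE e) = fV (src A e) \<and> tgt B (fE e) = fV (tgt A e)
                    \<and> elab B (fE e) = elab A e) \<and>
     (\<forall>v\<in>nodes A. lab B (fV v) = lab A v \<and> root B (fV v) = root A v))"

record ('a, 'b) rule =
  rL :: "('a, 'b) graph"
  rK :: "('a, 'b) graph"
  rR :: "('a, 'b) graph"

definition is_match :: "('a, 'b) rule \<Rightarrow> ('v, 'e) graph \<Rightarrow> ('a \<Rightarrow> 'v) \<Rightarrow> ('b \<Rightarrow> 'e) \<Rightarrow> bool" where
  "is_match r G gV gE \<longleftrightarrow>
     morphism (rL r) G gV gE \<and> inj_on gV (nodes (rL r)) \<and> inj_on gE (edges (rL r)) \<and>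
     (\<forall>e\<in>edges G - gE ` edges (rL r).
        src G e \<notin> gV ` (nodes (rL r) - nodes (rK r)) \<and>
        tgt G e \<notin> gV ` (nodes (rL r) - nodes (rK r)))"

text \<open>The concrete result of applying rule r at match (gV,gE): the kept part of G
  (tagged Inl) together with a disjoint copy of the items of R not in K (tagged Inr).\<close>
definition apply_rule :: "('a, 'b) rule \<Rightarrow> ('v, 'e) graph \<Rightarrow> ('a \<Rightarrow> 'v) \<Rightarrow> ('b \<Rightarrow> 'e)
    \<Rightarrow> ('v + 'a, 'e + 'b) graph" where
  "apply_rule r G gV gE =
    (let L = rL r; K = rK r; R = rR r;
         embR = (\<lambda>v. if v \<in> nodes K then Inl (gV v) else Inr v);
         preK = (\<lambda>x. inv_into (nodes K) gV x)
     in \<lparr> nodes = Inl ` (nodes G - gV ` (nodes L - nodes K)) \<union> Inr ` (nodes R - nodes K),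
          edges = Inl ` (edges G - gE ` (edges L - edges K)) \<union> Inr ` (edges R - edges K),
          src = case_sum (\<lambda>e. Inl (src G e)) (\<lambda>e. embR (src R e)),
          tgt = case_sum (\<lambda>e. Inl (tgt G e)) (\<lambda>e. embR (tgt R e)),
          lab = case_sum (\<lambda>x. if x \<in> gV ` nodes K \<and> lab K (preK x) = None
                               then lab R (preK x) else lab G x) (lab R),
          elab = case_sum (elab G) (elab R),
          root = case_sum (\<lambda>x. if x \<in> gV ` nodes K \<and> root K (preK x) = None
                               then root R (preK x) else root G x) (root R) \<rparr>)"

definition dstep :: "(nat, nat) rule set \<Rightarrow> (nat, nat) graph \<Rightarrow> (nat, nat) graph \<Rightarrow> bool" where
  "dstep rs G H \<longleftrightarrow> tlrg G \<and>
     (\<exists>r\<in>rs. \<exists>gV gE. is_match r G gV gE \<and> graph_iso (apply_rule r G gV gE) H)"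

definition r0 :: "(nat, nat) rule" where
  "r0 = \<lparr> rL = \<lparr> nodes = {1, 2}, edges = {0}, src = (\<lambda>_. 1), tgt = (\<lambda>_. 2),
                 lab = [1 \<mapsto> NSq, 2 \<mapsto> NSq], elab = (\<lambda>_. ESq), root = [1 \<mapsto> False, 2 \<mapsto> True] \<rparr>,
          rK = \<lparr> nodes = {1}, edges = {}, src = (\<lambda>_. 1), tgt = (\<lambda>_. 1),
                 lab = Map.empty, elab = (\<lambda>_. ESq), root = Map.empty \<rparr>,
          rR = \<lparr> nodes = {1}, edges = {}, src = (\<lambda>_. 1), tgt = (\<lambda>_. 1),
                 lab = [1 \<mapsto> NSq], elab = (\<lambda>_. ESq), root = [1 \<mapsto> True] \<rparr> \<rparr>"

definition r1 :: "(nat, nat) rule" where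
  "r1 = \<lparr> rL = \<lparr> nodes = {1, 2}, edges = {0}, src = (\<lambda>_. 1), tgt = (\<lambda>_. 2),
                 lab = [1 \<mapsto> NTri, 2 \<mapsto> NSq], elab = (\<lambda>_. ESq), root = [1 \<mapsto> False, 2 \<mapsto> True] \<rparr>,
          rK = \<lparr> nodes = {1}, edges = {}, src = (\<lambda>_. 1), tgt = (\<lambda>_. 1),
                 lab = Map.empty, elab = (\<lambda>_. ESq), root = Map.empty \<rparr>,
          rR = \<lparr> nodes = {1}, edges = {}, src = (\<lambda>_. 1), tgt = (\<lambda>_. 1),
                 lab = [1 \<mapsto> NSq], elab = (\<lambda>_. ESq), root = [1 \<mapsto> True] \<rparr> \<rparr>"

definition r2 :: "(nat, nat) rule" where
  "r2 = \<lparr> rL = \<lparr> nodes = {1, 2}, edges = {0}, src = (\<lambda>_. 1), tgt = (\<lambda>_. 2),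
                 lab = [1 \<mapsto> NSq, 2 \<mapsto> NSq], elab = (\<lambda>_. ESq), root = [1 \<mapsto> True, 2 \<mapsto> False] \<rparr>,
          rK = \<lparr> nodes = {1, 2}, edges = {}, src = (\<lambda>_. 1), tgt = (\<lambda>_. 1),
                 lab = Map.empty, elab = (\<lambda>_. ESq), root = Map.empty \<rparr>,
          rR = \<lparr> nodes = {1, 2}, edges = {0}, src = (\<lambda>_. 1), tgt = (\<lambda>_. 2),
                 lab = [1 \<mapsto> NTri, 2 \<mapsto> NSq], elab = (\<lambda>_. ESq), root = [1 \<mapsto> False, 2 \<mapsto> True] \<rparr> \<rparr>"

definition input_graph :: "('v, 'e) graph \<Rightarrow> bool" where
  "input_graph G \<longleftrightarrow> tlrg G \<and> card {v \<in> nodes G. root G v = Some True} = 1 \<and>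
     (\<forall>v\<in>nodes G. lab G v = Some NSq) \<and> (\<forall>e\<in>edges G. elab G e = ESq)"

fun uwalk :: "('v, 'e) graph \<Rightarrow> 'v \<Rightarrow> 'e list \<Rightarrow> 'v \<Rightarrow> bool" where
  "uwalk G x [] y \<longleftrightarrow> x = y \<and> x \<in> nodes G"
| "uwalk G x (e # es) y \<longleftrightarrow> e \<in> edges G \<and>
     ((src G e = x \<and> uwalk G (tgt G e) es y) \<or> (tgt G e = x \<and> uwalk G (src G e) es y))"

definition uconnected :: "('v, 'e) graph \<Rightarrow> bool" where
  "uconnected G \<longleftrightarrow> (\<forall>x\<in>nodes G. \<forall>y\<in>nodes G. \<exists>es. uwalk G x es y)"

text \<open>An undirected cycle (including loops and pairs of parallel edges) exists iff
  there is a non-empty closed walk using pairwise distinct edges.\<close>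
definition has_ucycle :: "('v, 'e) graph \<Rightarrow> bool" where
  "has_ucycle G \<longleftrightarrow> (\<exists>x es. es \<noteq> [] \<and> distinct es \<and> uwalk G x es x)"

definition is_tree :: "('v, 'e) graph \<Rightarrow> bool" where
  "is_tree G \<longleftrightarrow> nodes G \<noteq> {} \<and> uconnected G \<and> \<not> has_ucycle G \<and>
     (\<forall>v\<in>nodes G. card {e \<in> edges G. tgt G e = v} \<le> 1)"

definition input_tree :: "('v, 'e) graph \<Rightarrow> bool" where
  "input_tree G \<longleftrightarrow> input_graph G \<and> is_tree G"

end

theory Submission
  imports Defs
begin

text \<open>
  Every graph derived from an input tree is an out-tree (connected, acyclic, every node has at most
  one incoming edge) with a unique rooted node, labelled \<open>\<square>\<close>, such that every
  \<open>\<triangle>\<close>-node has a directed path to the root. Rules r0 and r1 delete the root, which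
  is then a leaf, and root its parent instead; r2 moves the root to a child, re-creating the edge
  and marking the old position \<open>\<triangle>\<close>. Both preserve the invariant.

  If such a graph has at least two nodes, the root has an incident edge. If the root has a child,
  the child is unrooted and labelled \<open>\<square>\<close> -- a \<open>\<triangle>\<close> there would lie both
  below and above the root -- so r2 applies. Otherwise the root is a leaf whose only edge comes
  from its parent, and r0 or r1 applies according to the parent's label.
\<close>

fun dwalk :: "('v, 'e) graph \<Rightarrow> 'v \<Rightarrow> 'e list \<Rightarrow> 'v \<Rightarrow> bool" where
  "dwalk G x [] y \<longleftrightarrow> x = y"
| "dwalk G x (e # es) y \<longleftrightarrow> e \<in> edges G \<and> src G e = x \<and> dwalk G (tgt G e) es y"

lemma dwalk_append: "dwalk G x (p @ q) y \<longleftrightarrow> (\<exists>z. dwalk G x p z \<and> dwalk G z q y)"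
  by (induction p arbitrary: x) auto

lemma dwalk_snoc: "dwalk G x (p @ [e]) y \<longleftrightarrow> e \<in> edges G \<and> tgt G e = y \<and> dwalk G x p (src G e)"
  by (auto simp: dwalk_append)

lemma uwalk_if_dwalk: "wf_graph G \<Longrightarrow> dwalk G x es y \<Longrightarrow> es \<noteq> [] \<Longrightarrow> uwalk G x es y"
proof (induction es arbitrary: x)
  case (Cons e es)
  then show ?case by (cases es) (auto simp: wf_graph_def)
qed simp

lemma has_ucycle_if_closed_dwalk:
  assumes "wf_graph G" "dwalk G x es x" "es \<noteq> []"
  shows "has_ucycle G"
  using assms(2,3)
proof (induction "length es" arbitrary: x es rule: less_induct)
  case less
  show ?case
  proof (cases "distinct es")
    case True
    then show ?thesis using less.prems uwalk_if_dwalk[OF assms(1)] unfolding has_ucycle_def by blast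
  next
    case False
    then obtain a b c y where es: "es = a @ [y] @ b @ [y] @ c" using not_distinct_decomp by blast
    then have "dwalk G (tgt G y) (b @ [y]) (tgt G y)"
      using less.prems(1) by (auto simp: dwalk_append)
    moreover have "length (b @ [y]) < length es" using es by simp
    ultimately show ?thesis using less.hyps by blast
  qed
qed

definition ranked :: "('v, 'e) graph \<Rightarrow> bool" where
  "ranked G \<longleftrightarrow> (\<exists>d :: 'v \<Rightarrow> nat. \<forall>e\<in>edges G. d (src G e) < d (tgt G e))"

lemma dwalk_rank_less:
  assumes "\<forall>e\<in>edges G. d (src G e) < (d (tgt G e) :: nat)" "dwalk G x es y" "es \<noteq> []"
  shows "d x < d y"
  using assms(2,3)
proof (induction es arbitrary: x)
  case (Cons e es)
  then show ?case using assms(1) by (cases es) fastforce+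
qed simp

text \<open>The number of proper ancestors strictly increases along every edge.\<close>
lemma ranked_if_no_ucycle:
  assumes "wf_graph G" "\<not> has_ucycle G"
  shows "ranked G"
proof -
  define anc where "anc v = {u \<in> nodes G. \<exists>es. es \<noteq> [] \<and> dwalk G u es v}" for v
  have "card (anc (src G e)) < card (anc (tgt G e))" if e: "e \<in> edges G" for e
  proof (rule psubset_card_mono)
    show "finite (anc (tgt G e))"
      using assms(1) unfolding anc_def wf_graph_def by simp
    have "anc (src G e) \<subseteq> anc (tgt G e)"
    proof
      fix u assume "u \<in> anc (src G e)"
      then obtain es where "u \<in> nodes G" "es \<noteq> []" "dwalk G u es (src G e)"
        unfolding anc_def by blast
      moreover have "dwalk G u (es @ [e]) (tgt G e)" using calculation e by (simp add: dwalk_snoc)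
      ultimately show "u \<in> anc (tgt G e)" unfolding anc_def by blast
    qed
    moreover have "src G e \<in> anc (tgt G e)"
    proof -
      have "dwalk G (src G e) [e] (tgt G e)" using e by simp
      moreover have "src G e \<in> nodes G" using e assms(1) unfolding wf_graph_def by blast
      ultimately show ?thesis unfolding anc_def by blast
    qed
    moreover have "src G e \<notin> anc (src G e)"
      using has_ucycle_if_closed_dwalk[OF assms(1)] assms(2) unfolding anc_def by blast
    ultimately show "anc (src G e) \<subset> anc (tgt G e)" by blast
  qed
  then show ?thesis unfolding ranked_def by (intro exI[of _ "\<lambda>v. card (anc v)"]) blast
qed

definition shape_hom :: "('a, 'b) graph \<Rightarrow> ('v, 'e) graph \<Rightarrow> ('a \<Rightarrow> 'v) \<Rightarrow> ('b \<Rightarrow> 'e) \<Rightarrow> bool" where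
  "shape_hom A B fV fE \<longleftrightarrow> fV ` nodes A \<subseteq> nodes B \<and>
     (\<forall>e\<in>edges A. fE e \<in> edges B \<and> src B (fE e) = fV (src A e) \<and> tgt B (fE e) = fV (tgt A e))"

definition shape_iso :: "('a, 'b) graph \<Rightarrow> ('v, 'e) graph \<Rightarrow> ('a \<Rightarrow> 'v) \<Rightarrow> ('b \<Rightarrow> 'e) \<Rightarrow> bool" where
  "shape_iso A B fV fE \<longleftrightarrow> bij_betw fV (nodes A) (nodes B) \<and> bij_betw fE (edges A) (edges B) \<and>
     (\<forall>e\<in>edges A. src B (fE e) = fV (src A e) \<and> tgt B (fE e) = fV (tgt A e))"

lemma shape_hom_if_shape_iso: "shape_iso A B fV fE \<Longrightarrow> shape_hom A B fV fE"
  unfolding shape_iso_def shape_hom_def bij_betw_def by blast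

lemma uwalk_shape_hom: "shape_hom A B fV fE \<Longrightarrow> uwalk A x es y \<Longrightarrow> uwalk B (fV x) (map fE es) (fV y)"
  unfolding shape_hom_def by (induction es arbitrary: x) auto

lemma dwalk_shape_hom: "shape_hom A B fV fE \<Longrightarrow> dwalk A x es y \<Longrightarrow> dwalk B (fV x) (map fE es) (fV y)"
  unfolding shape_hom_def by (induction es arbitrary: x) auto

lemma uconnected_shape_hom_image:
  assumes "shape_hom A B fV fE" "nodes B = fV ` nodes A" "uconnected A"
  shows "uconnected B"
  unfolding uconnected_def
proof (intro ballI)
  fix x y assume "x \<in> nodes B" "y \<in> nodes B"
  then obtain a b where "a \<in> nodes A" "b \<in> nodes A" "x = fV a" "y = fV b"
    using assms(2) by blast
  then show "\<exists>es. uwalk B x es y"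
    using assms(3) uwalk_shape_hom[OF assms(1)] unfolding uconnected_def by blast
qed

definition out_tree :: "('v, 'e) graph \<Rightarrow> bool" where
  "out_tree G \<longleftrightarrow> (\<forall>e\<in>edges G. src G e \<in> nodes G \<and> tgt G e \<in> nodes G) \<and>
     inj_on (tgt G) (edges G) \<and> ranked G \<and> uconnected G"

lemma out_tree_shape_iso:
  assumes iso: "shape_iso A B fV fE" and A: "out_tree A"
  shows "out_tree B"
proof -
  have hom: "shape_hom A B fV fE" using iso by (rule shape_hom_if_shape_iso)
  have nB: "nodes B = fV ` nodes A" and eB: "edges B = fE ` edges A" and injV: "inj_on fV (nodes A)"
    and st: "\<forall>e\<in>edges A. src B (fE e) = fV (src A e) \<and> tgt B (fE e) = fV (tgt A e)"
    using iso unfolding shape_iso_def bij_betw_def by auto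
  have closed: "\<forall>e\<in>edges A. src A e \<in> nodes A \<and> tgt A e \<in> nodes A"
    and inj: "inj_on (tgt A) (edges A)" and conn: "uconnected A"
    using A unfolding out_tree_def by auto
  obtain d :: "_ \<Rightarrow> nat" where d: "\<forall>e\<in>edges A. d (src A e) < d (tgt A e)"
    using A unfolding out_tree_def ranked_def by blast
  have "\<forall>b\<in>edges B. src B b \<in> nodes B \<and> tgt B b \<in> nodes B"
    unfolding eB nB using closed st by auto
  moreover have "inj_on (tgt B) (edges B)"
  proof (rule inj_onI)
    fix b1 b2 assume "b1 \<in> edges B" "b2 \<in> edges B" "tgt B b1 = tgt B b2"
    then obtain a1 a2 where a: "a1 \<in> edges A" "a2 \<in> edges A" "b1 = fE a1" "b2 = fE a2"
      and "fV (tgt A a1) = fV (tgt A a2)"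
      using eB st by auto
    then have "tgt A a1 = tgt A a2" using injV closed by (meson inj_onD)
    then show "b1 = b2" using a inj by (metis inj_onD)
  qed
  moreover have "ranked B"
  proof -
    have "inv_into (nodes A) fV (fV x) = x" if "x \<in> nodes A" for x
      using injV that by (rule inv_into_f_f)
    then have "\<forall>b\<in>edges B. (d \<circ> inv_into (nodes A) fV) (src B b) < (d \<circ> inv_into (nodes A) fV) (tgt B b)"
      unfolding eB using d closed st by auto
    then show ?thesis unfolding ranked_def by blast
  qed
  moreover have "uconnected B" using uconnected_shape_hom_image[OF hom nB conn] .
  ultimately show ?thesis unfolding out_tree_def by blast
qed

abbreviation delete_leaf :: "('v, 'e) graph \<Rightarrow> 'v \<Rightarrow> 'e \<Rightarrow> ('v, 'e) graph" where
  "delete_leaf G v e \<equiv> G\<lparr>nodes := nodes G - {v}, edges := edges G - {e}\<rparr>"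

text \<open>A walk entering the leaf v must leave it at once through the same edge, so that detour can be cut out.\<close>
lemma uwalk_delete_leaf:
  assumes e: "e \<in> edges G" "tgt G e = v" "src G e \<noteq> v"
    and leaf: "\<forall>e'\<in>edges G - {e}. src G e' \<noteq> v \<and> tgt G e' \<noteq> v"
    and walk: "uwalk G x es y" "x \<noteq> v" "y \<noteq> v"
  shows "\<exists>es'. uwalk (delete_leaf G v e) x es' y"
  using walk
proof (induction "length es" arbitrary: x es rule: less_induct)
  case less
  show ?case
  proof (cases es)
    case Nil
    then show ?thesis using less.prems by (intro exI[of _ "[]"]) auto
  next
    case (Cons e1 rest)
    show ?thesis
    proof (cases "e1 = e")
      case False
      obtain z where z: "uwalk G z rest y" and e1: "e1 \<in> edges G"
        and step: "(src G e1 = x \<and> tgt G e1 = z) \<or> (tgt G e1 = x \<and> src G e1 = z)"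
        using less.prems(1) Cons by auto
      have "z \<noteq> v" using leaf e1 False step by auto
      then obtain es' where "uwalk (delete_leaf G v e) z es' y"
        using less.hyps[of rest z] z less.prems Cons by auto
      then have "uwalk (delete_leaf G v e) x (e1 # es') y" using step e1 False by auto
      then show ?thesis by blast
    next
      case True
      then have x: "x = src G e" and r: "uwalk G v rest y" using less.prems Cons e by auto
      then obtain e2 rest' where rest: "rest = e2 # rest'" using less.prems(3) by (cases rest) auto
      have "e2 = e" using r rest leaf by auto
      then have "uwalk G (src G e) rest' y" using r rest e by auto
      then show ?thesis using less.hyps[of rest' "src G e"] Cons rest x less.prems by auto
    qed
  qed
qed

lemma dwalk_delete_leaf:
  assumes e: "tgt G e = v" and leaf: "\<forall>e'\<in>edges G. src G e' \<noteq> v"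
    and walk: "dwalk G x es y" "y \<noteq> v"
  shows "dwalk (delete_leaf G v e) x es y"
  using walk
proof (induction es arbitrary: x)
  case (Cons e1 rest)
  have "tgt G e1 \<noteq> v"
    using Cons.prems leaf by (cases rest) auto
  then show ?case using Cons e by auto
qed simp

lemma out_tree_delete_leaf:
  assumes G: "out_tree G" and e: "e \<in> edges G" "tgt G e = v"
    and leaf: "\<forall>e'\<in>edges G - {e}. src G e' \<noteq> v \<and> tgt G e' \<noteq> v"
  shows "out_tree (delete_leaf G v e)"
proof -
  have closed: "\<forall>e\<in>edges G. src G e \<in> nodes G \<and> tgt G e \<in> nodes G"
    and inj: "inj_on (tgt G) (edges G)" and conn: "uconnected G" and rk: "ranked G"
    using G unfolding out_tree_def by auto
  have "src G e \<noteq> v" using rk e unfolding ranked_def by fastforce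
  then have "uconnected (delete_leaf G v e)"
    using conn uwalk_delete_leaf[OF e _ leaf] unfolding uconnected_def by simp blast
  moreover have "\<forall>e'\<in>edges G - {e}. src G e' \<in> nodes G - {v} \<and> tgt G e' \<in> nodes G - {v}"
    using closed leaf by blast
  ultimately show ?thesis
    using inj rk unfolding out_tree_def ranked_def by (auto intro: inj_on_subset)
qed

definition rooted_at :: "('v, 'e) graph \<Rightarrow> 'v \<Rightarrow> bool" where
  "rooted_at G \<rho> \<longleftrightarrow> \<rho> \<in> nodes G \<and> root G \<rho> = Some True \<and> lab G \<rho> = Some NSq \<and>
     (\<forall>v\<in>nodes G. root G v = Some True \<longrightarrow> v = \<rho>) \<and>
     (\<forall>v\<in>nodes G. lab G v = Some NTri \<longrightarrow> (\<exists>es. es \<noteq> [] \<and> dwalk G v es \<rho>))"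

definition rooted_out_tree :: "('v, 'e) graph \<Rightarrow> bool" where
  "rooted_out_tree G \<longleftrightarrow> out_tree G \<and> (\<exists>\<rho>. rooted_at G \<rho>)"

lemma rooted_out_tree_graph_iso:
  assumes iso: "graph_iso A B" and A: "rooted_out_tree A"
  shows "rooted_out_tree B"
proof -
  obtain fV fE where shape: "shape_iso A B fV fE"
    and lab: "\<And>v. v \<in> nodes A \<Longrightarrow> lab B (fV v) = lab A v"
    and root: "\<And>v. v \<in> nodes A \<Longrightarrow> root B (fV v) = root A v"
    using iso unfolding graph_iso_def shape_iso_def by blast
  have hom: "shape_hom A B fV fE" using shape by (rule shape_hom_if_shape_iso)
  have nB: "nodes B = fV ` nodes A" using shape unfolding shape_iso_def bij_betw_def by blast
  obtain \<rho> where \<rho>: "\<rho> \<in> nodes A" "root A \<rho> = Some True" "lab A \<rho> = Some NSq"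
    and unique: "\<And>v. v \<in> nodes A \<Longrightarrow> root A v = Some True \<Longrightarrow> v = \<rho>"
    and tri: "\<And>v. v \<in> nodes A \<Longrightarrow> lab A v = Some NTri \<Longrightarrow> \<exists>es. es \<noteq> [] \<and> dwalk A v es \<rho>"
    using A unfolding rooted_out_tree_def rooted_at_def by blast
  have "rooted_at B (fV \<rho>)"
    unfolding rooted_at_def
  proof (intro conjI ballI impI)
    show "fV \<rho> \<in> nodes B" "root B (fV \<rho>) = Some True" "lab B (fV \<rho>) = Some NSq"
      using \<rho> lab root nB by simp_all
    fix v assume "v \<in> nodes B"
    then obtain a where a: "a \<in> nodes A" "v = fV a" using nB by blast
    show "v = fV \<rho>" if "root B v = Some True"
      using that a root unique by simp
    show "\<exists>es. es \<noteq> [] \<and> dwalk B v es (fV \<rho>)" if tri_v: "lab B v = Some NTri"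
    proof -
      obtain es where "es \<noteq> []" "dwalk A a es \<rho>" using tri_v a lab tri by auto
      then have "dwalk B (fV a) (map fE es) (fV \<rho>)" "map fE es \<noteq> []"
        using dwalk_shape_hom[OF hom] by auto
      then show ?thesis using a(2) by blast
    qed
  qed
  moreover have "out_tree B"
    using out_tree_shape_iso[OF shape] A unfolding rooted_out_tree_def by blast
  ultimately show ?thesis unfolding rooted_out_tree_def by blast
qed

lemma rooted_out_tree_contract_leaf:
  assumes G: "rooted_out_tree G" and e: "e \<in> edges G" "tgt G e = v" "root G v = Some True"
    and leaf: "\<forall>e'\<in>edges G - {e}. src G e' \<noteq> v \<and> tgt G e' \<noteq> v"
    and shape: "shape_iso (delete_leaf G v e) A Inl Inl"
    and lab: "\<And>x. lab A (Inl x) = (if x = src G e then Some NSq else lab G x)"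
    and root: "\<And>x. root A (Inl x) = (if x = src G e then Some True else root G x)"
  shows "rooted_out_tree A"
proof -
  let ?u = "src G e"
  have tree: "out_tree G" and closed: "\<forall>e\<in>edges G. src G e \<in> nodes G \<and> tgt G e \<in> nodes G"
    and rk: "ranked G"
    using G unfolding rooted_out_tree_def out_tree_def by auto
  obtain \<rho> where unique: "\<And>x. x \<in> nodes G \<Longrightarrow> root G x = Some True \<Longrightarrow> x = \<rho>"
    and tri: "\<And>x. x \<in> nodes G \<Longrightarrow> lab G x = Some NTri \<Longrightarrow> \<exists>es. es \<noteq> [] \<and> dwalk G x es \<rho>"
    using G unfolding rooted_out_tree_def rooted_at_def by blast
  have v\<rho>: "v = \<rho>" using unique closed e by blast
  have uv: "?u \<noteq> v" using rk e unfolding ranked_def by fastforce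
  have hom: "shape_hom (delete_leaf G v e) A Inl Inl" using shape by (rule shape_hom_if_shape_iso)
  have nA: "nodes A = Inl ` (nodes G - {v})" using shape unfolding shape_iso_def bij_betw_def by simp
  have "rooted_at A (Inl ?u)"
    unfolding rooted_at_def
  proof (intro conjI ballI impI)
    show "Inl ?u \<in> nodes A" using nA closed e(1) uv by simp
    show "root A (Inl ?u) = Some True" "lab A (Inl ?u) = Some NSq" by (simp_all add: lab root)
    fix y assume "y \<in> nodes A"
    then obtain x where x: "x \<in> nodes G" "x \<noteq> v" "y = Inl x" using nA by blast
    show "y = Inl ?u" if root_y: "root A y = Some True"
    proof (rule ccontr)
      assume "y \<noteq> Inl ?u"
      then have "root G x = Some True" using root_y x(3) root[of x] by simp
      then show False using unique x v\<rho> by blast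
    qed
    show "\<exists>es. es \<noteq> [] \<and> dwalk A y es (Inl ?u)" if tri_y: "lab A y = Some NTri"
    proof -
      have xu: "x \<noteq> ?u" and "lab G x = Some NTri"
        using tri_y x(3) lab[of x] by (simp_all split: if_splits)
      then obtain es where es: "es \<noteq> []" "dwalk G x es v" using x(1) tri v\<rho> by blast
      then obtain es1 el where "es = es1 @ [el]" by (metis rev_exhaust)
      with es have "el \<in> edges G" "tgt G el = v" "dwalk G x es1 (src G el)" by (simp_all add: dwalk_snoc)
      then have walk: "dwalk G x es1 ?u" using leaf by blast
      have "\<forall>e'\<in>edges G. src G e' \<noteq> v" using leaf uv by blast
      then have "dwalk (delete_leaf G v e) x es1 ?u" using dwalk_delete_leaf[OF e(2) _ walk] uv by blast
      moreover have "es1 \<noteq> []" using walk xu by (cases es1) auto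
      ultimately have "dwalk A (Inl x) (map Inl es1) (Inl ?u)" "map Inl es1 \<noteq> []"
        using dwalk_shape_hom[OF hom] by auto
      then show ?thesis using x(3) by blast
    qed
  qed
  moreover have "out_tree A"
    using out_tree_shape_iso[OF shape out_tree_delete_leaf[OF tree e(1,2) leaf]] .
  ultimately show ?thesis unfolding rooted_out_tree_def by blast
qed

lemma rooted_out_tree_push_root:
  assumes G: "rooted_out_tree G" and e: "e \<in> edges G" "src G e = \<rho>" "root G \<rho> = Some True"
    and shape: "shape_iso G A Inl fE"
    and lab: "\<And>x. lab A (Inl x) =
      (if x = \<rho> then Some NTri else if x = tgt G e then Some NSq else lab G x)"
    and root: "\<And>x. root A (Inl x) =
      (if x = \<rho> then Some False else if x = tgt G e then Some True else root G x)"
  shows "rooted_out_tree A"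
proof -
  let ?w = "tgt G e"
  have tree: "out_tree G" and closed: "\<forall>e\<in>edges G. src G e \<in> nodes G \<and> tgt G e \<in> nodes G"
    and rk: "ranked G"
    using G unfolding rooted_out_tree_def out_tree_def by auto
  obtain \<rho>' where unique: "\<And>x. x \<in> nodes G \<Longrightarrow> root G x = Some True \<Longrightarrow> x = \<rho>'"
    and tri: "\<And>x. x \<in> nodes G \<Longrightarrow> lab G x = Some NTri \<Longrightarrow> \<exists>es. es \<noteq> [] \<and> dwalk G x es \<rho>'"
    using G unfolding rooted_out_tree_def rooted_at_def by blast
  have "\<rho> = \<rho>'" using unique closed e by blast
  note unique = unique[folded this] and tri = tri[folded this]
  have w\<rho>: "?w \<noteq> \<rho>" using rk e unfolding ranked_def by fastforce
  have hom: "shape_hom G A Inl fE" using shape by (rule shape_hom_if_shape_iso)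
  have nA: "nodes A = Inl ` nodes G" using shape unfolding shape_iso_def bij_betw_def by simp
  have "rooted_at A (Inl ?w)"
    unfolding rooted_at_def
  proof (intro conjI ballI impI)
    show "Inl ?w \<in> nodes A" using nA closed e(1) by simp
    show "root A (Inl ?w) = Some True" "lab A (Inl ?w) = Some NSq" using w\<rho> by (simp_all add: lab root)
    fix y assume "y \<in> nodes A"
    then obtain x where x: "x \<in> nodes G" "y = Inl x" using nA by blast
    show "y = Inl ?w" if root_y: "root A y = Some True"
    proof (rule ccontr)
      assume "y \<noteq> Inl ?w"
      then have "x \<noteq> \<rho>" "root G x = Some True" using root_y x(2) root[of x] by (simp_all split: if_splits)
      then show False using unique x(1) by blast
    qed
    show "\<exists>es. es \<noteq> [] \<and> dwalk A y es (Inl ?w)" if tri_y: "lab A y = Some NTri"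
    proof -
      obtain es where "dwalk G x (es @ [e]) ?w"
      proof (cases "x = \<rho>")
        case True
        then have "dwalk G x ([] @ [e]) ?w" using e by simp
        then show ?thesis by (rule that)
      next
        case False
        then have "lab G x = Some NTri" using tri_y x(2) lab[of x] by (simp split: if_splits)
        then obtain es where "dwalk G x es \<rho>" using x(1) tri by blast
        then have "dwalk G x (es @ [e]) ?w" using e by (simp add: dwalk_snoc)
        then show ?thesis by (rule that)
      qed
      then have "dwalk A (Inl x) (map fE (es @ [e])) (Inl ?w)" by (rule dwalk_shape_hom[OF hom])
      then show ?thesis using x(2) by (intro exI[of _ "map fE (es @ [e])"]) simp
    qed
  qed
  moreover have "out_tree A" using out_tree_shape_iso[OF shape tree] .
  ultimately show ?thesis unfolding rooted_out_tree_def by blast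
qed

lemma rooted_out_tree_apply_r0_r1:
  assumes G: "rooted_out_tree G" and r: "r \<in> {r0, r1}" and m: "is_match r G gV gE"
  shows "rooted_out_tree (apply_rule r G gV gE)"
proof -
  let ?A = "apply_rule r G gV gE"
  have L: "nodes (rL r) = {1, 2}" "edges (rL r) = {0}" and KR: "rK r = rK r0" "rR r = rR r0"
    using r by (auto simp: r0_def r1_def)
  have f: "gE 0 \<in> edges G" "src G (gE 0) = gV 1" "tgt G (gE 0) = gV 2" "root G (gV 2) = Some True"
    and leaf: "\<forall>e'\<in>edges G - {gE 0}. src G e' \<noteq> gV 2 \<and> tgt G e' \<noteq> gV 2"
    using m r unfolding is_match_def morphism_def r0_def r1_def by auto
  have "nodes ?A = Inl ` (nodes G - {gV 2})" "edges ?A = Inl ` (edges G - {gE 0})"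
    "\<And>e'. src ?A (Inl e') = Inl (src G e')" "\<And>e'. tgt ?A (Inl e') = Inl (tgt G e')"
    by (simp_all add: apply_rule_def Let_def L KR r0_def)
  then have "shape_iso (delete_leaf G (gV 2) (gE 0)) ?A Inl Inl"
    unfolding shape_iso_def by (simp add: bij_betw_def)
  moreover have "inv_into {1} gV (gV 1) = 1" by (simp add: inv_into_f_f)
  then have "lab ?A (Inl x) = (if x = src G (gE 0) then Some NSq else lab G x)"
    and "root ?A (Inl x) = (if x = src G (gE 0) then Some True else root G x)" for x
    by (simp_all add: apply_rule_def Let_def L KR r0_def f(2))
  ultimately show ?thesis using rooted_out_tree_contract_leaf[OF G f(1,3,4) leaf] by blast
qed

lemma rooted_out_tree_apply_r2:
  assumes G: "rooted_out_tree G" and m: "is_match r2 G gV gE"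
  shows "rooted_out_tree (apply_rule r2 G gV gE)"
proof -
  let ?A = "apply_rule r2 G gV gE"
  define \<phi> :: "_ \<Rightarrow> _ + nat" where "\<phi> e' = (if e' = gE 0 then Inr 0 else Inl e')" for e'
  have f: "gE 0 \<in> edges G" "src G (gE 0) = gV 1" "tgt G (gE 0) = gV 2" "root G (gV 1) = Some True"
    "gV 1 \<noteq> gV 2"
    using m unfolding is_match_def morphism_def r2_def by auto
  have inv: "inv_into {1, 2} gV (gV 1) = 1" "inv_into {1, 2} gV (gV 2) = 2"
    using f(5) by (simp_all add: inv_into_f_f inj_on_def)
  have "nodes ?A = Inl ` nodes G" "edges ?A = \<phi> ` edges G"
    "\<And>e'. src ?A (\<phi> e') = Inl (src G e')" "\<And>e'. tgt ?A (\<phi> e') = Inl (tgt G e')"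
    using f(1-3) unfolding \<phi>_def by (auto simp: apply_rule_def Let_def r2_def)
  moreover have "inj_on \<phi> (edges G)" unfolding \<phi>_def by (auto simp: inj_on_def)
  ultimately have "shape_iso G ?A Inl \<phi>"
    unfolding shape_iso_def by (simp add: bij_betw_def)
  moreover have "lab ?A (Inl x) =
      (if x = src G (gE 0) then Some NTri else if x = tgt G (gE 0) then Some NSq else lab G x)"
    and "root ?A (Inl x) =
      (if x = src G (gE 0) then Some False else if x = tgt G (gE 0) then Some True else root G x)" for x
    using inv f(5) by (simp_all add: apply_rule_def Let_def r2_def f(2,3))
  moreover have "root G (src G (gE 0)) = Some True" using f(2,4) by simp
  ultimately show ?thesis by (intro rooted_out_tree_push_root[OF G f(1) refl])
qed

lemma rooted_out_tree_dstep:
  assumes "dstep {r0, r1, r2} G H" and G: "rooted_out_tree G"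
  shows "rooted_out_tree H"
proof -
  obtain r gV gE where "r \<in> {r0, r1, r2}" "is_match r G gV gE" "graph_iso (apply_rule r G gV gE) H"
    using assms(1) unfolding dstep_def by blast
  then show ?thesis
    using rooted_out_tree_apply_r0_r1[OF G] rooted_out_tree_apply_r2[OF G] rooted_out_tree_graph_iso
    by blast
qed

lemma rooted_out_tree_if_input_tree:
  assumes "input_tree G"
  shows "rooted_out_tree G"
proof -
  have wf: "wf_graph G" and roots: "card {v \<in> nodes G. root G v = Some True} = 1"
    and squares: "\<forall>v\<in>nodes G. lab G v = Some NSq" and tree: "is_tree G"
    using assms unfolding input_tree_def input_graph_def tlrg_def by auto
  have closed: "\<forall>e\<in>edges G. src G e \<in> nodes G \<and> tgt G e \<in> nodes G"
    using wf unfolding wf_graph_def by blast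
  have "inj_on (tgt G) (edges G)"
  proof (rule inj_onI)
    fix e1 e2 assume e: "e1 \<in> edges G" "e2 \<in> edges G" "tgt G e1 = tgt G e2"
    let ?In = "{e \<in> edges G. tgt G e = tgt G e1}"
    have "card ?In \<le> 1" using tree closed e(1) unfolding is_tree_def by blast
    moreover have "finite ?In" using wf unfolding wf_graph_def by simp
    ultimately show "e1 = e2" using e card_le_Suc0_iff_eq[of ?In] by auto
  qed
  moreover have "ranked G" using ranked_if_no_ucycle[OF wf] tree unfolding is_tree_def by blast
  moreover obtain \<rho> where "{v \<in> nodes G. root G v = Some True} = {\<rho>}"
    using roots by (rule card_1_singletonE)
  then have "rooted_at G \<rho>" using squares unfolding rooted_at_def by auto
  ultimately show ?thesis
    using closed tree unfolding rooted_out_tree_def out_tree_def is_tree_def by blast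
qed

lemma match_r2_if_root_has_child:
  assumes H: "rooted_out_tree H" "tlrg H" and \<rho>: "rooted_at H \<rho>"
    and e: "e \<in> edges H" "src H e = \<rho>"
  shows "is_match r2 H (\<lambda>i. if i = 1 then \<rho> else tgt H e) (\<lambda>_. e)"
proof -
  let ?w = "tgt H e"
  obtain d :: "_ \<Rightarrow> nat" where d: "\<forall>e\<in>edges H. d (src H e) < d (tgt H e)"
    using H unfolding rooted_out_tree_def out_tree_def ranked_def by blast
  have w: "?w \<in> nodes H" using H(1) e(1) unfolding rooted_out_tree_def out_tree_def by blast
  have less: "d \<rho> < d ?w" using d e by blast
  then have "?w \<noteq> \<rho>" by blast
  then have "root H ?w = Some False"
    using w \<rho> H(2) unfolding rooted_at_def tlrg_def by fastforce
  moreover have "lab H ?w = Some NSq"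
  proof -
    have "lab H ?w \<noteq> Some NTri"
      using w \<rho> dwalk_rank_less[OF d] less unfolding rooted_at_def by fastforce
    then show ?thesis using w H(2) unfolding tlrg_def by (metis nlabel.exhaust option.exhaust)
  qed
  ultimately show ?thesis
    using e w \<rho> \<open>?w \<noteq> \<rho>\<close> elabel.exhaust unfolding is_match_def morphism_def r2_def rooted_at_def
    by (auto simp: inj_on_def)
qed

lemma match_r0_r1_if_root_is_leaf:
  assumes H: "rooted_out_tree H" "tlrg H" and \<rho>: "rooted_at H \<rho>"
    and e: "e \<in> edges H" "tgt H e = \<rho>" and leaf: "\<forall>e'\<in>edges H. src H e' \<noteq> \<rho>"
  shows "\<exists>r\<in>{r0, r1}. is_match r H (\<lambda>i. if i = 1 then src H e else \<rho>) (\<lambda>_. e)"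
proof -
  let ?u = "src H e"
  have u: "?u \<in> nodes H" and "?u \<noteq> \<rho>" and "inj_on (tgt H) (edges H)"
    using H(1) e leaf unfolding rooted_out_tree_def out_tree_def by auto
  then have "\<forall>e'\<in>edges H - {e}. src H e' \<noteq> \<rho> \<and> tgt H e' \<noteq> \<rho>"
    using e leaf by (metis DiffE inj_onD singletonI)
  moreover have "root H ?u = Some False"
    using u \<open>?u \<noteq> \<rho>\<close> \<rho> H(2) unfolding rooted_at_def tlrg_def by fastforce
  moreover obtain l where "lab H ?u = Some l" using u H(2) unfolding tlrg_def by blast
  ultimately show ?thesis
    using e u \<rho> \<open>?u \<noteq> \<rho>\<close> elabel.exhaust
    unfolding is_match_def morphism_def r0_def r1_def rooted_at_def
    by (cases l) (auto simp: inj_on_def)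
qed

lemma rooted_out_tree_normal_form:
  assumes H: "rooted_out_tree H" "tlrg H"
  shows "card (nodes H) = 1 \<or> (\<exists>r\<in>{r0, r1, r2}. \<exists>gV gE. is_match r H gV gE)"
proof (cases "card (nodes H) = 1")
  case False
  obtain \<rho> where \<rho>: "rooted_at H \<rho>" using H(1) unfolding rooted_out_tree_def by blast
  then have "nodes H \<noteq> {\<rho>}" using False by auto
  then obtain w where "w \<in> nodes H" "w \<noteq> \<rho>" using \<rho> unfolding rooted_at_def by blast
  then obtain es where "uwalk H \<rho> es w"
    using H(1) \<rho> unfolding rooted_out_tree_def out_tree_def uconnected_def rooted_at_def by blast
  then obtain e where e: "e \<in> edges H" "src H e = \<rho> \<or> tgt H e = \<rho>"
    using \<open>w \<noteq> \<rho>\<close> by (cases es) auto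
  show ?thesis
  proof (cases "\<exists>e'\<in>edges H. src H e' = \<rho>")
    case True
    then show ?thesis using match_r2_if_root_has_child[OF H \<rho>] by blast
  next
    case False
    then show ?thesis using match_r0_r1_if_root_is_leaf[OF H \<rho>] e by blast
  qed
qed simp

theorem lemma4p9:
  fixes G H :: "(nat, nat) graph"
  assumes "input_tree G"
    and "tlrg H"
    and "(dstep {r0, r1, r2})\<^sup>*\<^sup>* G H"
  shows "card (nodes H) = 1 \<or> (\<exists>r\<in>{r0, r1, r2}. \<exists>gV gE. is_match r H gV gE)"
proof -
  have "rooted_out_tree H"
    using assms(3)
  proof (induction rule: rtranclp_induct)
    case base
    show ?case using assms(1) by (rule rooted_out_tree_if_input_tree)
  next
    case (step y z)
    show ?case using step.hyps(2) step.IH by (rule rooted_out_tree_dstep)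
  qed
  then show ?thesis using assms(2) by (rule rooted_out_tree_normal_form)
qed

end
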